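(* Let $0<\beta<1$, $T>0$, $n_T$ a positive integer, $\tau=T/n_T$, $t_k=k\tau$. Let $\varpi_j$ be defined by $(1-z)^\beta=\sum_{j\ge0}\varpi_j z^j$, $\varrho_j$ by $(1-z)^{-\beta}=\sum_{j\ge0}\varrho_jz^j$, and $P_j:=\tau^\beta\varrho_j$. For a sequence $w^0,\dots,w^{n_T}$ define $D_\tau^{(\beta)}w^k=\tau^{-\beta}\sum_{j=0}^k\varpi_{k-j}(w^j-w^0)$, and for $\theta\in[0,1]$ set $w^{k-\theta}=(1-\theta)w^k+\theta w^{k-1}$ ($k\ge1$). Let $0\le\theta\le1$, and let $\{g^k\}_{k=0}^{n_T}$ and $\{\lambda_l\}_{l=0}^{n_T-1}$ be given non-negative sequences. Assume there is a constant $\lambda$ (independent of the time step size) with $\lambda\ge\sum_{l=0}^{k-1}\lambda_l$ for $1\le k\le n_T$, and that $$\tau\le \frac{1}{\sqrt[\beta]{2\lambda(1+\beta)}}.$$ Then for any non-negative sequence $\{v^k\}_{k=0}^{n_T}$ satisfying $$D_\tau^{(\beta)}(v^k)^2\le\sum_{l=1}^k\lambda_{k-l}(v^l)^2+v^{k-\theta}g^{k-\theta},\qquad 1\le k\le n_T,$$ (where $D_\tau^{(\beta)}(v^k)^2=\tau^{-\beta}\sum_{j=0}^k\varpi_{k-j}((v^j)^2-(v^0)^2)$) it holds that $$v^k\le 2E_\beta(2\lambda t_k^\beta)\Big(v^0+\max_{1\le m\le k}\sum_{j=1}^mP_{m-j}\,g^{j-\theta}\Big),\qquad 1\le k\le n_T,$$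 where $E_\beta(z)=\sum_{l=0}^\infty\frac{z^l}{\Gamma(1+l\beta)}$. *)

theory Defs
  imports "HOL-Analysis.Analysis"
begin

definition varpi :: "real \<Rightarrow> nat \<Rightarrow> real" where
  "varpi \<beta> j = (-1) ^ j * (\<beta> gchoose j)"

definition varrho :: "real \<Rightarrow> nat \<Rightarrow> real" where
  "varrho \<beta> j = (-1) ^ j * ((- \<beta>) gchoose j)"

definition Pcoef :: "real \<Rightarrow> real \<Rightarrow> nat \<Rightarrow> real" where
  "Pcoef \<beta> \<tau> j = \<tau> powr \<beta> * varrho \<beta> j"

definition Dtau :: "real \<Rightarrow> real \<Rightarrow> (nat \<Rightarrow> real) \<Rightarrow> nat \<Rightarrow> real" where
  "Dtau \<beta> \<tau> w k = \<tau> powr (- \<beta>) * (\<Sum>j=0..k. varpi \<beta> (k - j) * (w j - w 0))"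

definition wshift :: "real \<Rightarrow> (nat \<Rightarrow> real) \<Rightarrow> nat \<Rightarrow> real" where
  "wshift \<theta> w k = (1 - \<theta>) * w k + \<theta> * w (k - 1)"

definition mittag_leffler :: "real \<Rightarrow> real \<Rightarrow> real" where
  "mittag_leffler \<beta> z = (\<Sum>l. z ^ l / Gamma (1 + real l * \<beta>))"

end

theory Submission
  imports Defs
begin

text \<open>
  Write rho_j for the coefficients of (1 - z)^(-beta) and u^n = (v^n)^2. Since
  (1 - z)^beta (1 - z)^(-beta) = 1, convolving the discrete derivative with P_j = tau^beta rho_j
  inverts it, and the hypothesis becomes a discrete Volterra inequality
  u^n <= u^0 + sum_j P_(n-j) (sum_l lambda_(j-l) u^l + v^(j-theta) g^(j-theta)).
  Wendel's inequality for Gamma bounds rho_m by (m^beta - (m-1)^beta) / Gamma(1 + beta), and comparing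
  the resulting sums with Beta integrals shows that n |-> E_beta(c n^beta) is a supersolution of the
  corresponding Volterra equation. If M bounds v up to step k, induction therefore gives
  u^n <= 2 M F E_beta(2 lambda t_n^beta), with F the bracket in the claim; at an index where v attains
  M this reads M^2 <= 2 M F E_beta(2 lambda t_k^beta).
\<close>

section \<open>Bounds on the coefficients of (1 - z)^(-beta)\<close>

lemma varrho_eq_pochhammer: "varrho b j = pochhammer b j / fact j"
  unfolding varrho_def gbinomial_pochhammer by (simp flip: power_mult_distrib)

lemma varrho_0 [simp]: "varrho b 0 = 1"
  by (simp add: varrho_def)

lemma varrho_nonneg: "0 < b \<Longrightarrow> 0 \<le> varrho b j"
  unfolding varrho_eq_pochhammer by (simp add: pochhammer_nonneg)

lemma Pcoef_nonneg: "0 < b \<Longrightarrow> 0 \<le> Pcoef b \<tau> j"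
  by (simp add: Pcoef_def varrho_nonneg)

lemma varrho_eq_Gamma:
  assumes "0 < b"
  shows "varrho b j = Gamma (b + of_nat j) / (Gamma b * fact j)"
proof -
  have "b \<notin> \<int>\<^sub>\<le>\<^sub>0" using assms by (auto elim!: nonpos_Ints_cases)
  then show ?thesis unfolding varrho_eq_pochhammer by (simp add: pochhammer_Gamma)
qed

lemma Gamma_add_le_powr_mult_Gamma:
  fixes x s :: real
  assumes x: "0 < x" and s: "0 \<le> s" "s \<le> 1"
  shows "Gamma (x + s) \<le> x powr s * Gamma x"
proof -
  have "(ln \<circ> Gamma) ((1 - s) *\<^sub>R x + s *\<^sub>R (x + 1))
          \<le> (1 - s) * (ln \<circ> Gamma) x + s * (ln \<circ> Gamma) (x + 1)"
    by (rule convex_onD[OF log_convex_Gamma_real]) (use x s in auto)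
  moreover have "(1 - s) *\<^sub>R x + s *\<^sub>R (x + 1) = x + s"
    by (simp add: algebra_simps)
  moreover have "x \<notin> \<int>\<^sub>\<le>\<^sub>0" using x by (auto elim!: nonpos_Ints_cases)
  then have "Gamma (x + 1) = x * Gamma x" by (rule Gamma_plus1)
  ultimately have "ln (Gamma (x + s)) \<le> (1 - s) * ln (Gamma x) + s * ln (x * Gamma x)"
    by simp
  also have "\<dots> = ln (x powr s * Gamma x)"
    using x by (simp add: ln_mult ln_powr algebra_simps)
  finally show ?thesis
    using x s by (subst (asm) ln_le_cancel_iff) (auto intro!: Gamma_real_pos add_pos_nonneg)
qed

lemma powr_mult_Gamma_le_Gamma_add:
  fixes x b :: real
  assumes x: "1 \<le> x" and b: "0 < b" "b < 1"
  shows "x powr b * Gamma x \<le> 2 * Gamma (x + b)"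
proof -
  have "x \<notin> \<int>\<^sub>\<le>\<^sub>0" using x by (auto elim!: nonpos_Ints_cases)
  then have "x powr (1 - b) * (x powr b * Gamma x) = Gamma ((x + b) + (1 - b))"
    using x by (simp add: Gamma_plus1 mult.assoc flip: powr_add)
  also have "\<dots> \<le> (x + b) powr (1 - b) * Gamma (x + b)"
    by (rule Gamma_add_le_powr_mult_Gamma) (use x b in auto)
  also have "\<dots> \<le> (2 * x) powr (1 - b) * Gamma (x + b)"
    using x b by (intro mult_right_mono powr_mono2 less_imp_le[OF Gamma_real_pos]) auto
  also have "(2 * x) powr (1 - b) \<le> 2 * x powr (1 - b)"
  proof -
    have "(2::real) powr (1 - b) \<le> 2 powr 1" using b by (intro powr_mono) auto
    then show ?thesis using x by (simp add: powr_mult)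
  qed
  then have "(2 * x) powr (1 - b) * Gamma (x + b) \<le> 2 * x powr (1 - b) * Gamma (x + b)"
    using x b by (intro mult_right_mono less_imp_le[OF Gamma_real_pos]) auto
  finally have "x powr (1 - b) * (x powr b * Gamma x) \<le> x powr (1 - b) * (2 * Gamma (x + b))"
    by (simp add: mult_ac)
  then show ?thesis using x by simp
qed

lemma powr_diff_ge_derivative:
  fixes b :: real and m :: nat
  assumes b: "0 < b" "b < 1" and m: "1 \<le> m"
  shows "b * real m powr (b - 1) \<le> real m powr b - (real m - 1) powr b"
proof (cases "m = 1")
  case True
  then show ?thesis using b by simp
next
  case False
  then have m2: "2 \<le> real m" using m by simp
  have "\<exists>z. real m - 1 < z \<and> z < real m \<and>
          real m powr b - (real m - 1) powr b = (real m - (real m - 1)) * (b * z powr (b - 1))"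
    by (rule MVT2) (use m2 in \<open>auto intro!: has_real_derivative_powr\<close>)
  then obtain z where z: "real m - 1 < z" "z < real m"
    and mvt: "real m powr b - (real m - 1) powr b = b * z powr (b - 1)"
    by auto
  have "real m powr (b - 1) \<le> z powr (b - 1)"
    using z m2 b by (intro powr_mono2') auto
  then show ?thesis using mvt b by simp
qed

lemma varrho_le_powr_diff:
  fixes b :: real and m :: nat
  assumes b: "0 < b" "b < 1" and m: "1 \<le> m"
  shows "varrho b m \<le> (real m powr b - (real m - 1) powr b) / (b * Gamma b)"
proof -
  have Gamma_m: "Gamma (real m) = fact (m - 1)"
    using Gamma_fact[of "m - 1", where 'a = real] m by (simp add: of_nat_diff)
  have fact_m: "(fact m :: real) = real m * fact (m - 1)"
    using m fact_reduce[of m, where 'a = real] by simp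
  have "varrho b m = Gamma (real m + b) / (Gamma b * fact m)"
    using varrho_eq_Gamma[OF b(1)] by (simp add: add.commute)
  also have "\<dots> \<le> real m powr b * Gamma (real m) / (Gamma b * fact m)"
    using Gamma_add_le_powr_mult_Gamma[of "real m" b] b m
    by (intro divide_right_mono) (auto intro!: mult_nonneg_nonneg less_imp_le[OF Gamma_real_pos])
  also have "\<dots> = b * real m powr (b - 1) / (b * Gamma b)"
    using m b by (simp add: Gamma_m fact_m powr_diff field_simps)
  also have "\<dots> \<le> (real m powr b - (real m - 1) powr b) / (b * Gamma b)"
    using b by (intro divide_right_mono powr_diff_ge_derivative m) auto
  finally show ?thesis .
qed

lemma Beta_integrand_piece_ge:
  fixes b g x y I :: real
  assumes b: "0 < b" and g: "0 \<le> g" and xy: "0 \<le> x" "x \<le> y" "y \<le> 1"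
    and I: "((\<lambda>t. t powr g * (1 - t) powr (b - 1)) has_integral I) {x..y}"
  shows "x powr g * ((1 - x) powr b - (1 - y) powr b) / b \<le> I"
proof -
  let ?F = "\<lambda>t. - (x powr g * (1 - t) powr b / b)"
  have "((\<lambda>t. x powr g * (1 - t) powr (b - 1)) has_integral ?F y - ?F x) {x..y}"
  proof (rule fundamental_theorem_of_calculus_interior)
    show "continuous_on {x..y} ?F"
      using b xy by (intro continuous_intros continuous_on_powr') auto
    fix t assume t: "t \<in> {x<..<y}"
    then have "t < 1" using xy by auto
    then have "(?F has_real_derivative x powr g * (1 - t) powr (b - 1)) (at t)"
      using b by (auto intro!: derivative_eq_intros simp: field_simps)
    then show "(?F has_vector_derivative x powr g * (1 - t) powr (b - 1)) (at t)"
      by (simp add: has_real_derivative_iff_has_vector_derivative)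
  qed (use xy in auto)
  then have "?F y - ?F x \<le> I"
    by (rule has_integral_le[OF _ I]) (use xy g in \<open>auto intro!: mult_right_mono powr_mono2\<close>)
  then show ?thesis by (simp add: field_simps diff_divide_distrib)
qed

lemma integral_uniform_partition:
  fixes f :: "real \<Rightarrow> real" and n m :: nat
  assumes n: "0 < n" and f: "f integrable_on {0..1}" and m: "m \<le> n"
  shows "integral {0..real m / n} f = (\<Sum>j<m. integral {real j / n..real (Suc j) / n} f)"
  using m
proof (induction m)
  case (Suc m)
  have "real (Suc m) / n \<le> 1" using Suc.prems n by (simp add: field_simps)
  then have "f integrable_on {0..real (Suc m) / n}"
    by (intro integrable_subinterval_real[OF f]) auto
  then have "integral {0..real m / n} f + integral {real m / n..real (Suc m) / n} f
               = integral {0..real (Suc m) / n} f"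
    by (intro Henstock_Kurzweil_Integration.integral_combine) (use n in \<open>auto simp: field_simps\<close>)
  then show ?case using Suc by simp
qed simp

lemma lower_Riemann_sum_le_Beta:
  fixes b g :: real and n :: nat
  assumes b: "0 < b" and g: "0 \<le> g" and n: "0 < n"
  shows "(\<Sum>j=1..n-1. (real j / n) powr g * ((1 - real j / n) powr b - (1 - real (Suc j) / n) powr b) / b)
           \<le> Beta (g + 1) b"
proof -
  define f where "f = (\<lambda>t::real. t powr g * (1 - t) powr (b - 1))"
  have Beta: "(f has_integral Beta (g + 1) b) {0..1}"
    using has_integral_Beta_real[of "g + 1" b] b g by (simp add: f_def)
  then have f_int: "f integrable_on {0..1}" by blast
  have f_int_piece: "f integrable_on {real j / n..real (Suc j) / n}" if "j < n" for j
    by (rule integrable_subinterval_real[OF f_int]) (use that n in \<open>auto simp: field_simps\<close>)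
  have "(\<Sum>j=1..n-1. (real j / n) powr g * ((1 - real j / n) powr b - (1 - real (Suc j) / n) powr b) / b)
          \<le> (\<Sum>j=1..n-1. integral {real j / n..real (Suc j) / n} f)"
  proof (intro sum_mono Beta_integrand_piece_ge[OF b g])
    fix j assume "j \<in> {1..n-1}"
    then have "j < n" using n by auto
    from integrable_integral[OF f_int_piece[OF this]]
    show "((\<lambda>t. t powr g * (1 - t) powr (b - 1)) has_integral
            integral {real j / n..real (Suc j) / n} f) {real j / n..real (Suc j) / n}"
      by (simp add: f_def)
  qed (use n in \<open>auto simp: field_simps\<close>)
  also have "\<dots> \<le> (\<Sum>j<n. integral {real j / n..real (Suc j) / n} f)"
    by (rule sum_mono2) (use n f_int_piece in \<open>auto intro!: integral_nonneg simp: f_def\<close>)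
  also have "\<dots> = integral {0..1} f"
    using integral_uniform_partition[OF n f_int, of n] n by simp
  also have "\<dots> = Beta (g + 1) b"
    using Beta by (rule integral_unique)
  finally show ?thesis .
qed

lemma powr_diff_rescale:
  fixes b g :: real and j n :: nat
  assumes b: "0 < b" and j: "j < n"
  shows "(real (n - j) powr b - (real (n - j) - 1) powr b) / b * real j powr g
           = real n powr (g + b) *
             ((real j / n) powr g * ((1 - real j / n) powr b - (1 - real (Suc j) / n) powr b) / b)"
proof -
  have n: "0 < real n" using j by simp
  have "1 - real j / n = real (n - j) / n"
    using j n by (simp add: field_simps of_nat_diff)
  then have scaled_j: "(1 - real j / n) powr b = real (n - j) powr b / real n powr b"
    by (simp add: powr_divide)
  have "1 - real (Suc j) / n = (real (n - j) - 1) / n"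
    using j n by (simp add: field_simps of_nat_diff)
  then have scaled_Suc_j: "(1 - real (Suc j) / n) powr b = (real (n - j) - 1) powr b / real n powr b"
    using j by (simp add: powr_divide)
  have scaled_0: "(real j / n) powr g = real j powr g / real n powr g"
    by (simp add: powr_divide)
  have rescale: "(A - B) / b * J = (P * Q) * ((J / P) * (A / Q - B / Q) / b)"
    if "0 < P" "0 < Q" for A B J P Q :: real
    using that b by (simp add: field_simps)
  show ?thesis
    unfolding scaled_0 scaled_j scaled_Suc_j powr_add by (rule rescale) (use n in auto)
qed

lemma varrho_convolution_powr_le:
  fixes b g :: real and n :: nat
  assumes b: "0 < b" "b < 1" and g: "0 \<le> g" and n: "1 \<le> n"
  shows "(\<Sum>j=1..n-1. varrho b (n - j) * real j powr g)
           \<le> real n powr (g + b) * Gamma (g + 1) / Gamma (g + 1 + b)"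
proof -
  have Gamma_b: "0 < Gamma b" using b by simp
  have "(\<Sum>j=1..n-1. varrho b (n - j) * real j powr g)
          \<le> (\<Sum>j=1..n-1. (real (n - j) powr b - (real (n - j) - 1) powr b) / (b * Gamma b) * real j powr g)"
    by (intro sum_mono mult_right_mono varrho_le_powr_diff b) auto
  also have "\<dots> = real n powr (g + b) / Gamma b *
      (\<Sum>j=1..n-1. (real j / n) powr g * ((1 - real j / n) powr b - (1 - real (Suc j) / n) powr b) / b)"
    unfolding sum_distrib_left
  proof (intro sum.cong refl)
    fix j assume "j \<in> {1..n-1}"
    then have "j < n" using n by auto
    then have "(real (n - j) powr b - (real (n - j) - 1) powr b) / b * real j powr g / Gamma b
        = real n powr (g + b) *
          ((real j / n) powr g * ((1 - real j / n) powr b - (1 - real (Suc j) / n) powr b) / b) / Gamma b"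
      by (simp only: powr_diff_rescale[OF b(1)])
    then show "(real (n - j) powr b - (real (n - j) - 1) powr b) / (b * Gamma b) * real j powr g
            = real n powr (g + b) / Gamma b *
              ((real j / n) powr g * ((1 - real j / n) powr b - (1 - real (Suc j) / n) powr b) / b)"
      by (simp add: mult_ac)
  qed
  also have "\<dots> \<le> real n powr (g + b) / Gamma b * Beta (g + 1) b"
    by (intro mult_left_mono lower_Riemann_sum_le_Beta) (use b g n Gamma_b in auto)
  also have "\<dots> = real n powr (g + b) * Gamma (g + 1) / Gamma (g + 1 + b)"
    using Gamma_b by (simp add: Beta_def field_simps)
  finally show ?thesis .
qed

section \<open>The Mittag-Leffler function\<close>

lemma Gamma_one_plus_mult_pos: "0 \<le> b \<Longrightarrow> 0 < Gamma (1 + real l * (b::real))"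
  by (intro Gamma_real_pos add_pos_nonneg) auto

lemma summable_mittag_leffler:
  fixes b z :: real
  assumes b: "0 < b" "b < 1" and z: "0 \<le> z"
  shows "summable (\<lambda>l. z ^ l / Gamma (1 + real l * b))"
proof -
  obtain N :: nat where N: "(4 * z) powr (1 / b) / b < real N"
    using reals_Archimedean2 by blast
  show ?thesis
  proof (rule summable_ratio_test[of "1 / 2" N])
    fix l assume l: "N \<le> l"
    define x where "x = 1 + real l * b"
    have x: "1 \<le> x" using b by (simp add: x_def)
    have Gamma_pos: "0 < Gamma x" "0 < Gamma (x + b)" using x b by auto
    have "(4 * z) powr (1 / b) \<le> x"
    proof -
      have "(4 * z) powr (1 / b) < real N * b" using N b by (simp add: field_simps)
      also have "\<dots> \<le> x" using l b by (simp add: x_def mult_right_mono add_increasing)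
      finally show ?thesis by simp
    qed
    then have "4 * z \<le> x powr b"
      using b z powr_mono2[of b "(4 * z) powr (1 / b)" x] by (simp add: powr_powr)
    then have "4 * z * Gamma x \<le> x powr b * Gamma x"
      using x by (intro mult_right_mono less_imp_le[OF Gamma_real_pos]) auto
    also have "\<dots> \<le> 2 * Gamma (x + b)"
      by (rule powr_mult_Gamma_le_Gamma_add[OF x b])
    finally have ratio: "z / Gamma (x + b) \<le> (1 / 2) / Gamma x"
      using Gamma_pos by (simp add: field_simps)
    have "norm (z ^ Suc l / Gamma (1 + real (Suc l) * b)) = z ^ l * (z / Gamma (x + b))"
      using z Gamma_pos by (simp add: x_def algebra_simps)
    also have "\<dots> \<le> z ^ l * ((1 / 2) / Gamma x)"
      using z ratio by (intro mult_left_mono) auto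
    also have "\<dots> = 1 / 2 * norm (z ^ l / Gamma (1 + real l * b))"
      using z Gamma_pos by (simp add: x_def)
    finally show "norm (z ^ Suc l / Gamma (1 + real (Suc l) * b))
                    \<le> 1 / 2 * norm (z ^ l / Gamma (1 + real l * b))" .
  qed simp
qed

lemma mittag_leffler_ge_1:
  fixes b z :: real
  assumes b: "0 < b" "b < 1" and z: "0 \<le> z"
  shows "1 \<le> mittag_leffler b z"
proof -
  have "(\<Sum>l\<in>{0}. z ^ l / Gamma (1 + real l * b)) \<le> (\<Sum>l. z ^ l / Gamma (1 + real l * b))"
    by (rule sum_le_suminf[OF summable_mittag_leffler[OF b z]])
       (use z b Gamma_one_plus_mult_pos[of b] in \<open>auto intro!: divide_nonneg_pos\<close>)
  then show ?thesis by (simp add: mittag_leffler_def)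
qed

lemma mittag_leffler_mono:
  fixes b z z' :: real
  assumes b: "0 < b" "b < 1" and z: "0 \<le> z" "z \<le> z'"
  shows "mittag_leffler b z \<le> mittag_leffler b z'"
  unfolding mittag_leffler_def
  by (rule suminf_le[OF _ summable_mittag_leffler[OF b z(1)] summable_mittag_leffler[OF b]])
     (use z b in \<open>auto intro!: divide_right_mono power_mono less_imp_le[OF Gamma_one_plus_mult_pos]\<close>)

lemma varrho_convolution_mittag_leffler_term_le:
  fixes b c :: real and n l :: nat
  assumes b: "0 < b" "b < 1" and c: "0 \<le> c" and n: "1 \<le> n"
  shows "c * (\<Sum>j=1..n-1. varrho b (n - j) * ((c * real j powr b) ^ l / Gamma (1 + real l * b)))
           \<le> (c * real n powr b) ^ Suc l / Gamma (1 + real (Suc l) * b)"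
proof -
  have term_powr: "(c * real x powr b) ^ k = c ^ k * real x powr (real k * b)" if "1 \<le> x" for x k :: nat
    using that by (simp add: power_mult_distrib powr_power)
  have Gamma_pos: "0 < Gamma (1 + real l * b)"
    using Gamma_one_plus_mult_pos[of b l] b by simp
  have "(\<Sum>j=1..n-1. varrho b (n - j) * ((c * real j powr b) ^ l / Gamma (1 + real l * b)))
          = c ^ l / Gamma (1 + real l * b) * (\<Sum>j=1..n-1. varrho b (n - j) * real j powr (real l * b))"
    unfolding sum_distrib_left by (intro sum.cong refl) (simp add: term_powr)
  also have "\<dots> \<le> c ^ l / Gamma (1 + real l * b) *
      (real n powr (real l * b + b) * Gamma (real l * b + 1) / Gamma (real l * b + 1 + b))"
    by (intro mult_left_mono varrho_convolution_powr_le b n) (use b c Gamma_pos in auto)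
  also have "\<dots> = c ^ l * real n powr (real l * b + b) / Gamma (real l * b + 1 + b)"
    using Gamma_pos by (simp add: field_simps)
  finally have "c * (\<Sum>j=1..n-1. varrho b (n - j) * ((c * real j powr b) ^ l / Gamma (1 + real l * b)))
      \<le> c * (c ^ l * real n powr (real l * b + b) / Gamma (real l * b + 1 + b))"
    using c by (rule mult_left_mono)
  also have "\<dots> = (c * real n powr b) ^ Suc l / Gamma (1 + real (Suc l) * b)"
    by (simp only: term_powr[OF n]) (simp add: algebra_simps)
  finally show ?thesis .
qed

text \<open>The discrete counterpart of 1 + c int_0^t (t - s)^(beta - 1) / Gamma(beta) E_beta(c s^beta) ds
  = E_beta(c t^beta), proved termwise in the series of E_beta.\<close>

lemma mittag_leffler_varrho_convolution_le:
  fixes b c :: real and n :: nat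
  assumes b: "0 < b" "b < 1" and c: "0 \<le> c" and n: "1 \<le> n"
  shows "1 + c * (\<Sum>j=1..n-1. varrho b (n - j) * mittag_leffler b (c * real j powr b))
           \<le> mittag_leffler b (c * real n powr b)"
proof -
  define T where "T = (\<lambda>x l :: nat. (c * real x powr b) ^ l / Gamma (1 + real l * b))"
  have summable_T: "summable (T x)" for x
    unfolding T_def by (rule summable_mittag_leffler[OF b]) (use c in auto)
  have ml_T: "mittag_leffler b (c * real x powr b) = suminf (T x)" for x
    by (simp add: mittag_leffler_def T_def)
  have summable_conv: "summable (\<lambda>l. \<Sum>j=1..n-1. varrho b (n - j) * T j l)"
    by (intro summable_sum summable_mult summable_T)
  have term_le: "c * (\<Sum>j=1..n-1. varrho b (n - j) * T j l) \<le> T n (Suc l)" for l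
    unfolding T_def by (rule varrho_convolution_mittag_leffler_term_le[OF b c n])
  have "c * (\<Sum>j=1..n-1. varrho b (n - j) * mittag_leffler b (c * real j powr b))
          = c * (\<Sum>j=1..n-1. \<Sum>l. varrho b (n - j) * T j l)"
    by (simp add: ml_T suminf_mult[OF summable_T])
  also have "\<dots> = c * (\<Sum>l. \<Sum>j=1..n-1. varrho b (n - j) * T j l)"
    by (simp add: suminf_sum summable_mult summable_T)
  also have "\<dots> = (\<Sum>l. c * (\<Sum>j=1..n-1. varrho b (n - j) * T j l))"
    by (rule suminf_mult[OF summable_conv, symmetric])
  also have "\<dots> \<le> (\<Sum>l. T n (Suc l))"
    by (rule suminf_le[OF term_le])
       (use summable_conv summable_T in \<open>auto intro: summable_mult simp: summable_Suc_iff\<close>)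
  also have "\<dots> = suminf (T n) - 1"
    by (simp only: suminf_split_head[OF summable_T]) (simp add: T_def)
  finally show ?thesis by (simp add: ml_T)
qed

section \<open>Inverting the discrete fractional derivative\<close>

lemma varpi_varrho_convolution:
  "(\<Sum>k=0..N. varpi b k * varrho b (N - k)) = (if N = 0 then 1 else 0)"
proof -
  have "(\<Sum>k=0..N. varpi b k * varrho b (N - k)) = (-1) ^ N * (\<Sum>k=0..N. (b gchoose k) * ((- b) gchoose (N - k)))"
    by (auto simp: sum_distrib_left varpi_def varrho_def power_add[symmetric] intro!: sum.cong)
  also have "\<dots> = (-1) ^ N * ((b + - b) gchoose N)"
    by (simp add: gbinomial_Vandermonde)
  finally show ?thesis by (cases N) auto
qed

lemma varrho_varpi_convolution_from:
  assumes "i \<le> m"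
  shows "(\<Sum>j=i..m. varrho b (m - j) * varpi b (j - i)) = (if i = m then 1 else 0)"
proof -
  have "(\<Sum>j=i..m. varrho b (m - j) * varpi b (j - i))
          = (\<Sum>k=0..m-i. varpi b k * varrho b (m - i - k))"
    by (subst sum.atLeastAtMost_shift_0[OF assms]) (simp add: mult.commute diff_diff_left)
  also have "\<dots> = (if i = m then 1 else 0)"
    by (simp only: varpi_varrho_convolution) (use assms in auto)
  finally show ?thesis .
qed

lemma sum_triangle_swap:
  fixes f :: "nat \<Rightarrow> nat \<Rightarrow> 'a :: comm_monoid_add"
  shows "(\<Sum>j=0..m. \<Sum>i=0..j. f i j) = (\<Sum>i=0..m. \<Sum>j=i..m. f i j)"
  by (induction m) (simp_all add: sum.distrib)

lemma varrho_convolution_inverts_varpi_convolution: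
  fixes w :: "nat \<Rightarrow> real"
  shows "(\<Sum>j=1..m. varrho b (m - j) * (\<Sum>i=0..j. varpi b (j - i) * (w i - w 0))) = w m - w 0"
proof -
  have "(\<Sum>j=1..m. varrho b (m - j) * (\<Sum>i=0..j. varpi b (j - i) * (w i - w 0)))
          = (\<Sum>j=0..m. \<Sum>i=0..j. varrho b (m - j) * varpi b (j - i) * (w i - w 0))"
    by (simp add: sum.atLeast_Suc_atMost[of 0 m] sum_distrib_left mult.assoc)
  also have "\<dots> = (\<Sum>i=0..m. (w i - w 0) * (\<Sum>j=i..m. varrho b (m - j) * varpi b (j - i)))"
    by (simp add: sum_triangle_swap sum_distrib_left mult_ac)
  also have "\<dots> = (\<Sum>i=0..m. (w i - w 0) * (if i = m then 1 else 0))"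
    by (intro sum.cong refl) (simp add: varrho_varpi_convolution_from)
  also have "\<dots> = w m - w 0"
    by (simp add: if_distrib cong: if_cong)
  finally show ?thesis .
qed

lemma le_Pcoef_convolution_if_Dtau_le:
  fixes b \<tau> :: real and u R :: "nat \<Rightarrow> real"
  assumes b: "0 < b" and \<tau>: "0 < \<tau>" and D: "\<And>j. 1 \<le> j \<Longrightarrow> j \<le> m \<Longrightarrow> Dtau b \<tau> u j \<le> R j"
  shows "u m \<le> u 0 + (\<Sum>j=1..m. Pcoef b \<tau> (m - j) * R j)"
proof -
  have "\<tau> powr b * \<tau> powr (- b) = 1" using \<tau> by (simp flip: powr_add)
  then have "(\<Sum>j=1..m. Pcoef b \<tau> (m - j) * Dtau b \<tau> u j)
               = (\<Sum>j=1..m. varrho b (m - j) * (\<Sum>i=0..j. varpi b (j - i) * (u i - u 0)))"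
    unfolding Pcoef_def Dtau_def by (metis (no_types, lifting) mult.assoc mult.left_commute mult_1)
  also have "\<dots> = u m - u 0"
    by (rule varrho_convolution_inverts_varpi_convolution)
  finally have "u m - u 0 = (\<Sum>j=1..m. Pcoef b \<tau> (m - j) * Dtau b \<tau> u j)" ..
  also have "\<dots> \<le> (\<Sum>j=1..m. Pcoef b \<tau> (m - j) * R j)"
    using b by (intro sum_mono mult_left_mono D Pcoef_nonneg) auto
  finally show ?thesis by simp
qed

section \<open>A discrete fractional Gronwall inequality\<close>

lemma memory_sum_le:
  fixes lam u :: "nat \<Rightarrow> real"
  assumes lam: "\<And>l. l < j \<Longrightarrow> 0 \<le> lam l" and lam_sum: "(\<Sum>l<j. lam l) \<le> \<Lambda>"
    and u: "\<And>l. 1 \<le> l \<Longrightarrow> l \<le> j \<Longrightarrow> u l \<le> X" and X: "0 \<le> X"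
  shows "(\<Sum>l=1..j. lam (j - l) * u l) \<le> \<Lambda> * X"
proof -
  have "(\<Sum>l=1..j. lam (j - l) * u l) \<le> (\<Sum>l=1..j. lam (j - l) * X)"
    using lam u by (intro sum_mono mult_left_mono) auto
  also have "\<dots> = (\<Sum>l=1..j. lam (j - l)) * X"
    by (rule sum_distrib_right[symmetric])
  also have "(\<Sum>l=1..j. lam (j - l)) = (\<Sum>l<j. lam l)"
    by (rule sum.reindex_bij_witness[of _ "\<lambda>i. j - i" "\<lambda>l. j - l"]) auto
  also have "(\<Sum>l<j. lam l) * X \<le> \<Lambda> * X"
    using lam_sum X by (rule mult_right_mono)
  finally show ?thesis .
qed

lemma Pcoef_convolution_split_last:
  assumes "1 \<le> n"
  shows "(\<Sum>j=1..n. Pcoef b \<tau> (n - j) * S j) = \<tau> powr b * ((\<Sum>j=1..n-1. varrho b (n - j) * S j) + S n)"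
  using assms by (cases n) (simp_all add: Pcoef_def sum_distrib_left mult.assoc distrib_left)

text \<open>If u^n exceeded the bound it would dominate every earlier u^l, so the implicit memory term
  tau^b S_n is at most tau^b Lambda u^n <= u^n / 2 by the step size condition.\<close>

lemma fractional_Gronwall_step:
  fixes b \<tau> \<Lambda> \<psi> :: real and n :: nat and lam u r :: "nat \<Rightarrow> real"
  assumes b: "0 < b" "b < 1" and \<tau>: "0 < \<tau>" and \<Lambda>: "0 \<le> \<Lambda>" "2 * \<Lambda> * \<tau> powr b \<le> 1"
    and n: "1 \<le> n"
    and lam: "\<And>l. l < n \<Longrightarrow> 0 \<le> lam l"
    and lam_sum: "\<And>j. 1 \<le> j \<Longrightarrow> j \<le> n \<Longrightarrow> (\<Sum>l<j. lam l) \<le> \<Lambda>"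
    and D: "\<And>j. 1 \<le> j \<Longrightarrow> j \<le> n \<Longrightarrow> Dtau b \<tau> u j \<le> (\<Sum>l=1..j. lam (j - l) * u l) + r j"
    and \<psi>: "0 \<le> \<psi>" "u 0 + (\<Sum>j=1..n. Pcoef b \<tau> (n - j) * r j) \<le> \<psi>"
    and IH: "\<And>l. l < n \<Longrightarrow> u l \<le> 2 * \<psi> * mittag_leffler b (2 * \<Lambda> * (real l * \<tau>) powr b)"
  shows "u n \<le> 2 * \<psi> * mittag_leffler b (2 * \<Lambda> * (real n * \<tau>) powr b)"
proof (rule ccontr)
  define c where "c = 2 * \<Lambda> * \<tau> powr b"
  define E where "E = (\<lambda>l::nat. mittag_leffler b (c * real l powr b))"
  define S where "S = (\<lambda>j. \<Sum>l=1..j. lam (j - l) * u l)"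
  have c: "0 \<le> c" "c \<le> 1" using \<Lambda> by (auto simp: c_def)
  have E_eq: "mittag_leffler b (2 * \<Lambda> * (real l * \<tau>) powr b) = E l" for l
    using \<tau> by (simp add: E_def c_def powr_mult mult_ac)
  have E_mono: "E j \<le> E l" if "j \<le> l" for j l
    unfolding E_def using b c that by (intro mittag_leffler_mono mult_left_mono powr_mono2) auto
  have E_ge_1: "1 \<le> E l" for l
    unfolding E_def using b c by (intro mittag_leffler_ge_1) auto
  assume "\<not> ?thesis"
  then have exceeds: "2 * \<psi> * E n < u n" by (simp add: E_eq)
  have IH_mono: "u l \<le> 2 * \<psi> * E j" if "l < n" "l \<le> j" for l j
    using IH[OF that(1)] E_mono[OF that(2)] \<psi>(1) by (simp add: E_eq order_trans mult_left_mono)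
  have u_le_u_n: "u l \<le> u n" if "l \<le> n" for l
    using IH_mono[of l n] exceeds that by (cases "l = n") auto
  have "0 \<le> 2 * \<psi> * E n" using \<psi>(1) E_ge_1[of n] by simp
  then have u_n: "0 \<le> u n" using exceeds by linarith
  have S_n: "S n \<le> \<Lambda> * u n"
    unfolding S_def using lam lam_sum[OF n order.refl] u_le_u_n u_n
    by (intro memory_sum_le) auto
  have S_j: "S j \<le> \<Lambda> * (2 * \<psi> * E j)" if "1 \<le> j" "j < n" for j
    unfolding S_def using lam lam_sum that IH_mono \<psi>(1) E_ge_1[of j]
    by (intro memory_sum_le) auto
  have "(\<Sum>j=1..n-1. varrho b (n - j) * S j) \<le> (\<Sum>j=1..n-1. varrho b (n - j) * (\<Lambda> * (2 * \<psi> * E j)))"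
    using b n by (intro sum_mono mult_left_mono S_j varrho_nonneg) auto
  then have history: "(\<Sum>j=1..n. Pcoef b \<tau> (n - j) * S j)
                        \<le> \<tau> powr b * ((\<Sum>j=1..n-1. varrho b (n - j) * (\<Lambda> * (2 * \<psi> * E j))) + \<Lambda> * u n)"
    unfolding Pcoef_convolution_split_last[OF n] using S_n by (intro mult_left_mono add_mono) auto
  have "u n \<le> u 0 + (\<Sum>j=1..n. Pcoef b \<tau> (n - j) * (S j + r j))"
    using D by (intro le_Pcoef_convolution_if_Dtau_le b \<tau>) (auto simp: S_def)
  also have "\<dots> = u 0 + (\<Sum>j=1..n. Pcoef b \<tau> (n - j) * r j) + (\<Sum>j=1..n. Pcoef b \<tau> (n - j) * S j)"
    by (simp add: distrib_left sum.distrib)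
  also have "\<dots> \<le> \<psi> + \<tau> powr b * ((\<Sum>j=1..n-1. varrho b (n - j) * (\<Lambda> * (2 * \<psi> * E j))) + \<Lambda> * u n)"
    using \<psi>(2) history by linarith
  also have "\<dots> = \<psi> * (1 + c * (\<Sum>j=1..n-1. varrho b (n - j) * E j)) + c / 2 * u n"
    by (simp add: c_def sum_distrib_left algebra_simps)
  also have "\<dots> \<le> \<psi> * E n + u n / 2"
    using mittag_leffler_varrho_convolution_le[OF b c(1) n] \<psi>(1) c u_n
    by (intro add_mono mult_left_mono) (auto simp: E_def mult_left_le_one_le)
  finally show False using exceeds by simp
qed

lemma fractional_Gronwall:
  fixes b \<tau> \<Lambda> \<psi> :: real and K :: nat and lam u r :: "nat \<Rightarrow> real"
  assumes b: "0 < b" "b < 1" and \<tau>: "0 < \<tau>" and \<Lambda>: "0 \<le> \<Lambda>" "2 * \<Lambda> * \<tau> powr b \<le> 1"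
    and lam: "\<And>l. l < K \<Longrightarrow> 0 \<le> lam l"
    and lam_sum: "\<And>j. 1 \<le> j \<Longrightarrow> j \<le> K \<Longrightarrow> (\<Sum>l<j. lam l) \<le> \<Lambda>"
    and D: "\<And>j. 1 \<le> j \<Longrightarrow> j \<le> K \<Longrightarrow> Dtau b \<tau> u j \<le> (\<Sum>l=1..j. lam (j - l) * u l) + r j"
    and \<psi>_0: "0 \<le> \<psi>" "u 0 \<le> \<psi>"
    and \<psi>: "\<And>m. 1 \<le> m \<Longrightarrow> m \<le> K \<Longrightarrow> u 0 + (\<Sum>j=1..m. Pcoef b \<tau> (m - j) * r j) \<le> \<psi>"
    and n: "n \<le> K"
  shows "u n \<le> 2 * \<psi> * mittag_leffler b (2 * \<Lambda> * (real n * \<tau>) powr b)"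
  using n
proof (induction n rule: less_induct)
  case (less n)
  show ?case
  proof (cases "n = 0")
    case True
    have "u 0 \<le> 2 * \<psi> * 1" using \<psi>_0 by simp
    also have "\<dots> \<le> 2 * \<psi> * mittag_leffler b 0"
      using \<psi>_0 b by (intro mult_left_mono mittag_leffler_ge_1) auto
    finally show ?thesis using True by simp
  next
    case False
    then have "1 \<le> n" by simp
    show ?thesis
    proof (rule fractional_Gronwall_step[where lam = lam and u = u and r = r,
                                     OF b \<tau> \<Lambda> \<open>1 \<le> n\<close> _ _ _ \<psi>_0(1)])
      show "u 0 + (\<Sum>j=1..n. Pcoef b \<tau> (n - j) * r j) \<le> \<psi>"
        using \<psi> \<open>1 \<le> n\<close> less.prems by blast
      show "u l \<le> 2 * \<psi> * mittag_leffler b (2 * \<Lambda> * (real l * \<tau>) powr b)" if "l < n" for l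
        using less.IH less.prems that by simp
    qed (use lam lam_sum D less.prems in auto)
  qed
qed

lemma wshift_le:
  assumes "0 \<le> \<theta>" "\<theta> \<le> 1" "w k \<le> M" "w (k - 1) \<le> M"
  shows "wshift \<theta> w k \<le> M"
proof -
  have "(1 - \<theta>) * w k + \<theta> * w (k - 1) \<le> (1 - \<theta>) * M + \<theta> * M"
    using assms by (intro add_mono mult_left_mono) auto
  then show ?thesis by (simp add: wshift_def algebra_simps)
qed

lemma wshift_nonneg:
  assumes "0 \<le> \<theta>" "\<theta> \<le> 1" "0 \<le> w k" "0 \<le> w (k - 1)"
  shows "0 \<le> wshift \<theta> w k"
  using assms by (simp add: wshift_def)

lemma Pcoef_convolution_wshift_mult_le:
  fixes v g :: "nat \<Rightarrow> real"
  assumes b: "0 < b" and \<theta>: "0 \<le> \<theta>" "\<theta> \<le> 1"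
    and g: "\<And>j. j \<le> m \<Longrightarrow> 0 \<le> g j" and v: "\<And>j. j \<le> m \<Longrightarrow> v j \<le> M"
  shows "(\<Sum>j=1..m. Pcoef b \<tau> (m - j) * (wshift \<theta> v j * wshift \<theta> g j))
           \<le> M * (\<Sum>j=1..m. Pcoef b \<tau> (m - j) * wshift \<theta> g j)"
  unfolding sum_distrib_left
proof (intro sum_mono)
  fix j assume j: "j \<in> {1..m}"
  have "wshift \<theta> v j * wshift \<theta> g j \<le> M * wshift \<theta> g j"
    using j \<theta> g v by (intro mult_right_mono wshift_le wshift_nonneg) auto
  then show "Pcoef b \<tau> (m - j) * (wshift \<theta> v j * wshift \<theta> g j) \<le> M * (Pcoef b \<tau> (m - j) * wshift \<theta> g j)"
    using Pcoef_nonneg[OF b] by (metis mult.left_commute mult_left_mono)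
qed

lemma fractional_Gronwall_squares:
  fixes b \<tau> \<theta> \<Lambda> M G :: real and K :: nat and g lam v :: "nat \<Rightarrow> real"
  assumes b: "0 < b" "b < 1" and \<tau>: "0 < \<tau>" and \<Lambda>: "0 \<le> \<Lambda>" "2 * \<Lambda> * \<tau> powr b \<le> 1"
    and \<theta>: "0 \<le> \<theta>" "\<theta> \<le> 1"
    and g: "\<And>j. j \<le> K \<Longrightarrow> 0 \<le> g j"
    and lam: "\<And>l. l < K \<Longrightarrow> 0 \<le> lam l"
    and lam_sum: "\<And>j. 1 \<le> j \<Longrightarrow> j \<le> K \<Longrightarrow> (\<Sum>l<j. lam l) \<le> \<Lambda>"
    and D: "\<And>j. 1 \<le> j \<Longrightarrow> j \<le> K \<Longrightarrow>
        Dtau b \<tau> (\<lambda>j. (v j)\<^sup>2) j \<le> (\<Sum>l=1..j. lam (j - l) * (v l)\<^sup>2) + wshift \<theta> v j * wshift \<theta> g j"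
    and v_0: "0 \<le> v 0" and M: "\<And>j. j \<le> K \<Longrightarrow> v j \<le> M"
    and G: "0 \<le> G" "\<And>m. 1 \<le> m \<Longrightarrow> m \<le> K \<Longrightarrow> (\<Sum>j=1..m. Pcoef b \<tau> (m - j) * wshift \<theta> g j) \<le> G"
    and n: "n \<le> K"
  shows "(v n)\<^sup>2 \<le> 2 * (M * (v 0 + G)) * mittag_leffler b (2 * \<Lambda> * (real n * \<tau>) powr b)"
proof (rule fractional_Gronwall[where lam = lam and u = "\<lambda>j. (v j)\<^sup>2" and K = K
                                   and r = "\<lambda>j. wshift \<theta> v j * wshift \<theta> g j", OF b \<tau> \<Lambda> lam lam_sum D])
  have M_0: "0 \<le> M" using M[of 0] v_0 by simp
  have v_0_sq: "(v 0)\<^sup>2 \<le> M * v 0"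
    using M[of 0] v_0 by (simp add: power2_eq_square mult_right_mono)
  also have "\<dots> \<le> M * (v 0 + G)"
    using M_0 G by (simp add: mult_left_mono)
  finally show "(v 0)\<^sup>2 \<le> M * (v 0 + G)" .
  show "0 \<le> M * (v 0 + G)"
    using M_0 v_0 G by simp
  fix m assume m: "1 \<le> m" "m \<le> K"
  have "(\<Sum>j=1..m. Pcoef b \<tau> (m - j) * (wshift \<theta> v j * wshift \<theta> g j))
          \<le> M * (\<Sum>j=1..m. Pcoef b \<tau> (m - j) * wshift \<theta> g j)"
    by (rule Pcoef_convolution_wshift_mult_le[OF b(1) \<theta>]) (use g M m in auto)
  also have "\<dots> \<le> M * G"
    using G(2)[OF m] M_0 by (rule mult_left_mono)
  finally show "(v 0)\<^sup>2 + (\<Sum>j=1..m. Pcoef b \<tau> (m - j) * (wshift \<theta> v j * wshift \<theta> g j))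
                  \<le> M * (v 0 + G)"
    using v_0_sq by (simp add: distrib_left)
qed (use n in auto)

lemma fractional_Gronwall_root:
  fixes b \<tau> \<theta> \<Lambda> G :: real and K :: nat and g lam v :: "nat \<Rightarrow> real"
  assumes b: "0 < b" "b < 1" and \<tau>: "0 < \<tau>" and \<Lambda>: "0 \<le> \<Lambda>" "2 * \<Lambda> * \<tau> powr b \<le> 1"
    and \<theta>: "0 \<le> \<theta>" "\<theta> \<le> 1"
    and g: "\<And>j. j \<le> K \<Longrightarrow> 0 \<le> g j"
    and lam: "\<And>l. l < K \<Longrightarrow> 0 \<le> lam l"
    and lam_sum: "\<And>j. 1 \<le> j \<Longrightarrow> j \<le> K \<Longrightarrow> (\<Sum>l<j. lam l) \<le> \<Lambda>"
    and D: "\<And>j. 1 \<le> j \<Longrightarrow> j \<le> K \<Longrightarrow>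
        Dtau b \<tau> (\<lambda>j. (v j)\<^sup>2) j \<le> (\<Sum>l=1..j. lam (j - l) * (v l)\<^sup>2) + wshift \<theta> v j * wshift \<theta> g j"
    and v_0: "0 \<le> v 0"
    and G: "0 \<le> G" "\<And>m. 1 \<le> m \<Longrightarrow> m \<le> K \<Longrightarrow> (\<Sum>j=1..m. Pcoef b \<tau> (m - j) * wshift \<theta> g j) \<le> G"
    and n: "n \<le> K"
  shows "v n \<le> 2 * mittag_leffler b (2 * \<Lambda> * (real n * \<tau>) powr b) * (v 0 + G)"
proof -
  define M where "M = Max (v ` {0..n})"
  define E where "E i = mittag_leffler b (2 * \<Lambda> * (real i * \<tau>) powr b)" for i :: nat
  have v_M: "v j \<le> M" if "j \<le> n" for j
    unfolding M_def using that by (intro Max_ge) auto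
  have M: "0 \<le> M" using v_M[of 0] v_0 by simp
  have "M \<in> v ` {0..n}" unfolding M_def by (rule Max_in) auto
  then obtain i where i: "i \<le> n" "v i = M" by auto
  have "(v i)\<^sup>2 \<le> 2 * (M * (v 0 + G)) * E i"
    unfolding E_def
    by (rule fractional_Gronwall_squares[where g = g and lam = lam and v = v and K = n,
                                         OF b \<tau> \<Lambda> \<theta> _ _ _ _ v_0 _ G(1)])
       (use g lam lam_sum D v_M G(2) i n in auto)
  then have "M * M \<le> 2 * (M * (v 0 + G)) * E i"
    using i(2) by (simp add: power2_eq_square)
  also have "\<dots> \<le> 2 * (M * (v 0 + G)) * E n"
  proof (rule mult_left_mono)
    show "E i \<le> E n"
      unfolding E_def using i b \<Lambda> \<tau> by (intro mittag_leffler_mono mult_left_mono powr_mono2) auto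
    show "0 \<le> 2 * (M * (v 0 + G))"
      using M G v_0 by simp
  qed
  also have "\<dots> = M * (2 * E n * (v 0 + G))"
    by (simp add: mult_ac)
  finally have "M \<le> 2 * E n * (v 0 + G)"
    using M G v_0 mittag_leffler_ge_1[OF b, of "2 * \<Lambda> * (real n * \<tau>) powr b"] \<Lambda> \<tau>
    by (cases "M = 0") (auto simp: E_def mult_le_cancel_left)
  then show ?thesis
    using v_M[OF order.refl] by (simp add: E_def)
qed

theorem theorem2p1:
  fixes \<beta> T \<theta> \<Lambda> :: real and nT :: nat
    and g lam v :: "nat \<Rightarrow> real"
  defines "\<tau> \<equiv> T / real nT"
  assumes hbeta: "0 < \<beta>" "\<beta> < 1"
    and hT: "0 < T"
    and hnT: "0 < nT"
    and htheta: "0 \<le> \<theta>" "\<theta> \<le> 1"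
    and hg: "\<And>k. k \<le> nT \<Longrightarrow> 0 \<le> g k"
    and hlam: "\<And>l. l < nT \<Longrightarrow> 0 \<le> lam l"
    and hLam: "\<And>k. 1 \<le> k \<Longrightarrow> k \<le> nT \<Longrightarrow> (\<Sum>l<k. lam l) \<le> \<Lambda>"
    and hstep: "\<tau> powr \<beta> * (2 * \<Lambda> * (1 + \<beta>)) \<le> 1"
    and hv: "\<And>k. k \<le> nT \<Longrightarrow> 0 \<le> v k"
    and hineq: "\<And>k. 1 \<le> k \<Longrightarrow> k \<le> nT \<Longrightarrow>
        Dtau \<beta> \<tau> (\<lambda>j. (v j)\<^sup>2) k
          \<le> (\<Sum>l=1..k. lam (k - l) * (v l)\<^sup>2) + wshift \<theta> v k * wshift \<theta> g k"
  shows "\<And>k. 1 \<le> k \<Longrightarrow> k \<le> nT \<Longrightarrow>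
    v k \<le> 2 * mittag_leffler \<beta> (2 * \<Lambda> * (real k * \<tau>) powr \<beta>)
       * (v 0 + Max ((\<lambda>m. \<Sum>j=1..m. Pcoef \<beta> \<tau> (m - j) * wshift \<theta> g j) ` {1..k}))"
proof -
  fix k :: nat assume k: "1 \<le> k" "k \<le> nT"
  have \<tau>: "0 < \<tau>" using hT hnT by (simp add: \<tau>_def)
  have \<Lambda>: "0 \<le> \<Lambda>" using hLam[of 1] hlam[of 0] hnT by simp
  have "2 * \<Lambda> * \<tau> powr \<beta> \<le> \<tau> powr \<beta> * (2 * \<Lambda> * (1 + \<beta>))"
    using \<Lambda> hbeta by (simp add: algebra_simps)
  with hstep have step: "2 * \<Lambda> * \<tau> powr \<beta> \<le> 1" by simp
  define G where "G = Max ((\<lambda>m. \<Sum>j=1..m. Pcoef \<beta> \<tau> (m - j) * wshift \<theta> g j) ` {1..k})"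
  have G_ge: "(\<Sum>j=1..m. Pcoef \<beta> \<tau> (m - j) * wshift \<theta> g j) \<le> G" if "1 \<le> m" "m \<le> k" for m
    unfolding G_def using that by (intro Max_ge) auto
  have "0 \<le> (\<Sum>j=1..k. Pcoef \<beta> \<tau> (k - j) * wshift \<theta> g j)"
    using hbeta htheta hg k by (intro sum_nonneg mult_nonneg_nonneg Pcoef_nonneg wshift_nonneg) auto
  then have G: "0 \<le> G" using G_ge[OF k(1) order.refl] by linarith
  have "v k \<le> 2 * mittag_leffler \<beta> (2 * \<Lambda> * (real k * \<tau>) powr \<beta>) * (v 0 + G)"
    by (rule fractional_Gronwall_root[where g = g and lam = lam and v = v and K = k,
                                      OF hbeta \<tau> \<Lambda> step htheta _ _ _ _ _ G G_ge])
       (use hg hlam hLam hineq hv k in auto)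
  then show "v k \<le> 2 * mittag_leffler \<beta> (2 * \<Lambda> * (real k * \<tau>) powr \<beta>)
       * (v 0 + Max ((\<lambda>m. \<Sum>j=1..m. Pcoef \<beta> \<tau> (m - j) * wshift \<theta> g j) ` {1..k}))"
    by (simp add: G_def)
qed

end
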